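(* Let $n\ge1$, $a,b\ge0$ with $a+b\le n$, and let $B$ be a complex bilinear form on $\mathbb{C}^n$. Let $M^{quad}\subset\mathbb{C}^n\times\mathbb{R}$ be given by $$s=\sum_{j=1}^a|z_j|^2-\sum_{j=a+1}^{a+b}|z_j|^2+B(z,z)+\overline{B(z,z)}=Q(z,\bar z).$$ Then $M^{quad}$ has an isolated CR singularity (at the origin) if and only if the real quadratic form $Q$ is nondegenerate. In particular, the set of $B$ for which $M^{quad}$ has an isolated CR singularity is an open dense set; it is the complement of a proper real-algebraic subvariety of the set of all symmetric complex $n\times n$ matrices representing $B(z,z)$. Moreover, if $M\subset\mathbb{C}^n\times\mathbb{R}$ is a submanifold given by $s=Q(z,\bar z)+E(z,\bar z)$ with $E$ smooth, real-valued and $O(3)$ (so that $M^{quad}$ is its quadric model), and $Q$ is nondegenerate, then $M$ also has an isolated CR singularity at the origin.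
   Context: Coordinates $(z,s)\in\mathbb{C}^n\times\mathbb{R}$. For a real hypersurface $M$, a point $p\in M$ is a CR singularity if $\dim_{\mathbb{C}}\big((\mathbb{C}\otimes T_pM)\cap\operatorname{span}\{\partial/\partial\bar z_1,\dots,\partial/\partial\bar z_n\}\big)=n$ (equivalently, the $z$-plane $\mathbb{C}^n\times\{s\}$ is tangent to $M$ at $p$); otherwise (dimension $n-1$) $p$ is a CR point. $Q$ is nondegenerate if it is represented by a nonsingular real symmetric $2n\times 2n$ matrix. *)

theory Defs
  imports "HOL-Analysis.Analysis"
begin

text \<open>Coordinates (z,s) in C^n x R; C^n is modelled as complex ^ 'n for a finite
index type 'n, with a fixed enumeration sigma : 'n -> {0..<n} used to speak of
"the first a coordinates" etc.\<close>

definition cbilinear :: "(complex^'n \<Rightarrow> complex^'n \<Rightarrow> complex) \<Rightarrow> bool" where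
  "cbilinear B \<longleftrightarrow>
     (\<forall>x y w. B (x + y) w = B x w + B y w) \<and>
     (\<forall>x y w. B w (x + y) = B w x + B w y) \<and>
     (\<forall>c x w. B (c *s x) w = c * B x w) \<and>
     (\<forall>c x w. B w (c *s x) = c * B w x)"

definition bilin_of_matrix :: "complex^'n^'n \<Rightarrow> complex^'n \<Rightarrow> complex^'n \<Rightarrow> complex" where
  "bilin_of_matrix A z w = (\<Sum>i\<in>UNIV. \<Sum>j\<in>UNIV. A$i$j * z$i * w$j)"

definition quadQ :: "('n \<Rightarrow> nat) \<Rightarrow> nat \<Rightarrow> nat \<Rightarrow> (complex^'n \<Rightarrow> complex^'n \<Rightarrow> complex)
                      \<Rightarrow> complex^'n \<Rightarrow> real" where
  "quadQ \<sigma> a b B z =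
     (\<Sum>j\<in>{j. \<sigma> j < a}. (cmod (z$j))^2)
     - (\<Sum>j\<in>{j. a \<le> \<sigma> j \<and> \<sigma> j < a + b}. (cmod (z$j))^2)
     + Re (B z z + cnj (B z z))"

definition realify :: "complex^'n \<Rightarrow> real^('n + 'n)" where
  "realify z = (\<chi> k. case k of Inl j \<Rightarrow> Re (z$j) | Inr j \<Rightarrow> Im (z$j))"

definition nondegenerate_form :: "(complex^'n \<Rightarrow> real) \<Rightarrow> bool" where
  "nondegenerate_form Q \<longleftrightarrow>
     (\<exists>S :: real^('n + 'n)^('n + 'n).
        transpose S = S \<and> (\<forall>z. Q z = realify z \<bullet> (S *v realify z)) \<and> det S \<noteq> 0)"

text \<open>Hypersurface M = {(z, F z) | z in U} in C^n x R (graph of F over open U).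
Its real tangent space at (z, F z) is the graph of the differential of F.\<close>
definition graph_tangent_space :: "(complex^'n \<Rightarrow> real) \<Rightarrow> complex^'n \<Rightarrow> ((complex^'n) \<times> real) set" where
  "graph_tangent_space F z = range (\<lambda>v. (v, frechet_derivative F (at z) v))"

text \<open>CR singularity at (z, F z): the z-plane C^n x {s} is tangent to M there.\<close>
definition CR_singular_graph :: "(complex^'n \<Rightarrow> real) \<Rightarrow> complex^'n \<Rightarrow> bool" where
  "CR_singular_graph F z \<longleftrightarrow> (\<forall>v. (v, 0) \<in> graph_tangent_space F z)"

definition isolated_CR_singularity_at_origin ::
    "(complex^'n) set \<Rightarrow> (complex^'n \<Rightarrow> real) \<Rightarrow> bool" where
  "isolated_CR_singularity_at_origin U F \<longleftrightarrow>
     0 \<in> U \<and> CR_singular_graph F 0 \<and>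
     (\<exists>V. open V \<and> (0, F 0) \<in> V \<and>
        (\<forall>z\<in>U. (z, F z) \<in> V \<and> z \<noteq> 0 \<longrightarrow> \<not> CR_singular_graph F z))"

fun iter_deriv :: "'a::real_normed_vector list \<Rightarrow> ('a \<Rightarrow> real) \<Rightarrow> 'a \<Rightarrow> real" where
  "iter_deriv [] f = f"
| "iter_deriv (v # vs) f = (\<lambda>x. frechet_derivative (iter_deriv vs f) (at x) v)"

definition smooth_on :: "'a::real_normed_vector set \<Rightarrow> ('a \<Rightarrow> real) \<Rightarrow> bool" where
  "smooth_on U f \<longleftrightarrow>
     (\<forall>vs. iter_deriv vs f differentiable_on U \<and> continuous_on U (iter_deriv vs f))"

inductive_set real_poly_fun :: "((complex^'n^'n) \<Rightarrow> real) set" where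
  const: "(\<lambda>A. c) \<in> real_poly_fun"
| re: "(\<lambda>A. Re (A$i$j)) \<in> real_poly_fun"
| im: "(\<lambda>A. Im (A$i$j)) \<in> real_poly_fun"
| add: "p \<in> real_poly_fun \<Longrightarrow> q \<in> real_poly_fun \<Longrightarrow> (\<lambda>A. p A + q A) \<in> real_poly_fun"
| mult: "p \<in> real_poly_fun \<Longrightarrow> q \<in> real_poly_fun \<Longrightarrow> (\<lambda>A. p A * q A) \<in> real_poly_fun"

definition proper_real_algebraic_subvariety ::
    "(complex^'n^'n) set \<Rightarrow> (complex^'n^'n) set \<Rightarrow> bool" where
  "proper_real_algebraic_subvariety S Z \<longleftrightarrow>
     (\<exists>P. finite P \<and> P \<subseteq> real_poly_fun \<and> Z = {A\<in>S. \<forall>p\<in>P. p A = 0}) \<and> Z \<noteq> S"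

end

theory Submission
  imports Defs
begin

text \<open>Identify C^n with R^2n. Then Q(z) = x \<bullet> S x for a real symmetric matrix S whose entries
  are real polynomials in the coefficients of B, and dQ_z = 2 (\<cdot>) \<bullet> S z, so the CR singular
  points of the quadric form the linear subspace ker S: the origin is isolated exactly when
  det S \<noteq> 0, which is also what nondegeneracy of Q means. The polynomial det S does not vanish
  at B = 1, hence along any segment ending there it has only finitely many zeros; this gives
  density of its nonvanishing set. For the perturbation, comparing a smooth E = O(|z|^3) with
  its second-order expansion along short segments shows dE_z = o(|z|), whereas
  |dQ_z| \<ge> 2c|z| when S is invertible, so no point z \<noteq> 0 near the origin is CR singular.\<close>

definition unrealify :: "real^('n + 'n) \<Rightarrow> complex^'n" where
  "unrealify x = (\<chi> j. Complex (x $ Inl j) (x $ Inr j))"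

lemma realify_unrealify [simp]: "realify (unrealify x) = x"
  by (auto simp: realify_def unrealify_def vec_eq_iff split: sum.splits)

lemma unrealify_realify [simp]: "unrealify (realify z) = z"
  by (auto simp: realify_def unrealify_def vec_eq_iff complex_eq_iff)

lemma bounded_linear_realify: "bounded_linear realify"
proof -
  have "linear realify"
    by (rule linearI) (auto simp: realify_def vec_eq_iff split: sum.splits)
  then show ?thesis by (simp add: linear_conv_bounded_linear)
qed

lemma realify_0 [simp]: "realify 0 = 0"
  using bounded_linear_realify linear_0 bounded_linear.linear by blast

lemma realify_eq_0_iff [simp]: "realify z = 0 \<longleftrightarrow> z = 0"
  by (metis realify_0 unrealify_realify)

lemma norm_realify [simp]: "norm (realify z) = norm z"
proof -
  have "realify z \<bullet> realify z = (\<Sum>k\<in>UNIV <+> UNIV. realify z $ k * realify z $ k)"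
    by (simp add: inner_vec_def)
  also have "\<dots> = (\<Sum>j\<in>UNIV. Re (z$j) * Re (z$j)) + (\<Sum>j\<in>UNIV. Im (z$j) * Im (z$j))"
    by (subst sum.Plus) (auto simp: realify_def)
  also have "\<dots> = z \<bullet> z"
    by (simp add: inner_vec_def inner_complex_def sum.distrib)
  finally show ?thesis by (simp add: norm_eq_sqrt_inner)
qed

lemma norm_unrealify [simp]: "norm (unrealify x) = norm x"
  by (metis norm_realify realify_unrealify)

definition quad_form :: "real^('n + 'n)^('n + 'n) \<Rightarrow> complex^'n \<Rightarrow> real" where
  "quad_form S z = realify z \<bullet> (S *v realify z)"

lemma nondegenerate_form_iff:
  "nondegenerate_form Q \<longleftrightarrow> (\<exists>S. transpose S = S \<and> Q = quad_form S \<and> det S \<noteq> 0)"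
  by (auto simp: nondegenerate_form_def quad_form_def fun_eq_iff)

lemma has_derivative_quad_form:
  assumes "transpose S = S"
  shows "(quad_form S has_derivative (\<lambda>w. 2 * (realify w \<bullet> (S *v realify z)))) (at z)"
proof -
  have sym: "x \<bullet> (S *v y) = y \<bullet> (S *v x)" for x y
    by (metis assms dot_lmul_matrix inner_commute transpose_matrix_vector)
  have "((\<lambda>x. x \<bullet> (S *v x)) has_derivative (\<lambda>h. x \<bullet> (S *v h) + h \<bullet> (S *v x))) (at x)" for x
    by (rule has_derivative_inner[OF has_derivative_ident bounded_linear_imp_has_derivative]) simp
  moreover have "(\<lambda>h. x \<bullet> (S *v h) + h \<bullet> (S *v x)) = (\<lambda>h. 2 * (h \<bullet> (S *v x)))" for x
    by (rule ext) (simp only: sym[of x] mult_2)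
  ultimately have "((\<lambda>x. x \<bullet> (S *v x)) has_derivative (\<lambda>h. 2 * (h \<bullet> (S *v x)))) (at x)" for x
    by metis
  from has_derivative_compose[OF bounded_linear_imp_has_derivative[OF bounded_linear_realify] this]
  show ?thesis by (simp add: quad_form_def[abs_def] o_def)
qed

lemma CR_singular_graph_iff: "CR_singular_graph F z \<longleftrightarrow> (\<forall>v. frechet_derivative F (at z) v = 0)"
  by (auto simp: CR_singular_graph_def graph_tangent_space_def image_iff)

lemma CR_singular_graph_quad_form_iff:
  assumes "transpose S = S"
  shows "CR_singular_graph (quad_form S) z \<longleftrightarrow> S *v realify z = 0"
proof -
  have "frechet_derivative (quad_form S) (at z) = (\<lambda>w. 2 * (realify w \<bullet> (S *v realify z)))"
    using frechet_derivative_at[OF has_derivative_quad_form[OF assms]] by simp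
  then have "CR_singular_graph (quad_form S) z \<longleftrightarrow> (\<forall>w. realify w \<bullet> (S *v realify z) = 0)"
    by (simp add: CR_singular_graph_iff)
  also have "\<dots> \<longleftrightarrow> S *v realify z = 0"
  proof
    assume "\<forall>w. realify w \<bullet> (S *v realify z) = 0"
    then have "realify (unrealify (S *v realify z)) \<bullet> (S *v realify z) = 0" by blast
    then show "S *v realify z = 0" by simp
  qed simp
  finally show ?thesis .
qed

lemma det_nonzero_iff_kernel_trivial:
  fixes S :: "real^'m^'m"
  shows "det S \<noteq> 0 \<longleftrightarrow> (\<forall>x. S *v x = 0 \<longrightarrow> x = 0)"
  by (simp add: invertible_det_nz[symmetric] invertible_left_inverse matrix_left_invertible_ker)

lemma isolated_CR_singularity_quad_form_iff:
  assumes sym: "transpose S = S"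
  shows "isolated_CR_singularity_at_origin UNIV (quad_form S) \<longleftrightarrow> det S \<noteq> 0"
proof
  assume "det S \<noteq> 0"
  then show "isolated_CR_singularity_at_origin UNIV (quad_form S)"
    unfolding isolated_CR_singularity_at_origin_def det_nonzero_iff_kernel_trivial
    by (intro conjI exI[of _ UNIV]) (auto simp: CR_singular_graph_quad_form_iff[OF sym])
next
  assume iso: "isolated_CR_singularity_at_origin UNIV (quad_form S)"
  show "det S \<noteq> 0"
  proof
    assume "det S = 0"
    then obtain x where x: "x \<noteq> 0" "S *v x = 0" by (metis det_nonzero_iff_kernel_trivial)
    from iso obtain V where V: "open V" "(0, 0) \<in> V"
      and regular: "\<And>z. (z, quad_form S z) \<in> V \<Longrightarrow> z \<noteq> 0 \<Longrightarrow> \<not> CR_singular_graph (quad_form S) z"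
      unfolding isolated_CR_singularity_at_origin_def by (auto simp: quad_form_def)
    obtain e where e: "e > 0" "ball (0, 0) e \<subseteq> V"
      using V open_contains_ball by blast
    \<comment> \<open>the whole line through a kernel vector consists of CR singular points at height 0\<close>
    define z where "z = unrealify ((e / (2 * norm x)) *\<^sub>R x)"
    have Sz: "S *v realify z = 0" and qz: "quad_form S z = 0"
      by (simp_all add: z_def quad_form_def matrix_vector_mult_scaleR x)
    have "norm z = e / 2" using x e by (simp add: z_def)
    then have "(z, quad_form S z) \<in> V" "z \<noteq> 0"
      using e by (auto intro!: subsetD[OF e(2)] simp: qz dist_norm norm_Pair)
    then show False using regular Sz CR_singular_graph_quad_form_iff[OF sym] by blast
  qed
qed

lemma nondegenerate_quad_form_iff:
  assumes "transpose S = S"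
  shows "nondegenerate_form (quad_form S) \<longleftrightarrow> det S \<noteq> 0"
  using isolated_CR_singularity_quad_form_iff assms by (metis nondegenerate_form_iff)

definition hermitian_sign :: "('n \<Rightarrow> nat) \<Rightarrow> nat \<Rightarrow> nat \<Rightarrow> 'n \<Rightarrow> real" where
  "hermitian_sign \<sigma> a b j = (if \<sigma> j < a then 1 else if \<sigma> j < a + b then -1 else 0)"

text \<open>For z = x + iy one has Re (c z_i z_j) = Re c (x_i x_j - y_i y_j) - Im c (x_i y_j + y_i x_j);
  only the symmetric part A + A^T of A enters.\<close>
definition quadQ_matrix ::
    "('n::finite \<Rightarrow> nat) \<Rightarrow> nat \<Rightarrow> nat \<Rightarrow> complex^'n^'n \<Rightarrow> real^('n + 'n)^('n + 'n)" where
  "quadQ_matrix \<sigma> a b A = (\<chi> k l. case k of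
      Inl i \<Rightarrow> (case l of
        Inl j \<Rightarrow> (if i = j then hermitian_sign \<sigma> a b i else 0) + Re (A$i$j + A$j$i)
      | Inr j \<Rightarrow> - Im (A$i$j + A$j$i))
    | Inr i \<Rightarrow> (case l of
        Inl j \<Rightarrow> - Im (A$i$j + A$j$i)
      | Inr j \<Rightarrow> (if i = j then hermitian_sign \<sigma> a b i else 0) - Re (A$i$j + A$j$i)))"

lemma transpose_quadQ_matrix [simp]: "transpose (quadQ_matrix \<sigma> a b A) = quadQ_matrix \<sigma> a b A"
  by (auto simp: transpose_def quadQ_matrix_def vec_eq_iff split: sum.splits)

lemma quad_form_expand:
  "quad_form M z = (\<Sum>i\<in>UNIV. \<Sum>j\<in>UNIV.
       Re (z$i) * M$Inl i$Inl j * Re (z$j) + Re (z$i) * M$Inl i$Inr j * Im (z$j)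
     + Im (z$i) * M$Inr i$Inl j * Re (z$j) + Im (z$i) * M$Inr i$Inr j * Im (z$j))"
proof -
  have "quad_form M z =
      (\<Sum>k\<in>UNIV <+> UNIV. realify z $ k * (\<Sum>l\<in>UNIV <+> UNIV. M $ k $ l * realify z $ l))"
    by (simp add: quad_form_def inner_vec_def matrix_vector_mult_def)
  then show ?thesis
    by (simp add: sum.Plus realify_def sum_distrib_left sum.distrib algebra_simps del: UNIV_Plus_UNIV)
qed

lemma quad_form_quadQ_matrix:
  "quad_form (quadQ_matrix \<sigma> a b A) = quadQ \<sigma> a b (bilin_of_matrix A)"
proof
  fix z
  let ?M = "quadQ_matrix \<sigma> a b A" and ?h = "hermitian_sign \<sigma> a b"
  have entry: "Re (z$i) * ?M$Inl i$Inl j * Re (z$j) + Re (z$i) * ?M$Inl i$Inr j * Im (z$j)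
      + Im (z$i) * ?M$Inr i$Inl j * Re (z$j) + Im (z$i) * ?M$Inr i$Inr j * Im (z$j)
    = (if i = j then ?h i * (cmod (z$i))^2 else 0) + Re ((A$i$j + A$j$i) * z$i * z$j)" for i j
    using cmod_power2[of "z$i"]
    by (auto simp: quadQ_matrix_def algebra_simps power2_eq_square)
      (simp add: mult.assoc[symmetric] distrib_right[symmetric])
  have symmetrize: "(\<Sum>i\<in>UNIV. \<Sum>j\<in>UNIV. (A$i$j + A$j$i) * z$i * z$j) = 2 * bilin_of_matrix A z z"
  proof -
    have "(\<Sum>i\<in>UNIV. \<Sum>j\<in>UNIV. A$j$i * z$i * z$j) = bilin_of_matrix A z z"
      unfolding bilin_of_matrix_def by (subst sum.swap) (simp add: algebra_simps)
    then show ?thesis by (simp add: bilin_of_matrix_def algebra_simps sum.distrib)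
  qed
  have signs: "(\<Sum>i\<in>UNIV. ?h i * (cmod (z$i))^2) = (\<Sum>j\<in>{j. \<sigma> j < a}. (cmod (z$j))^2)
      - (\<Sum>j\<in>{j. a \<le> \<sigma> j \<and> \<sigma> j < a + b}. (cmod (z$j))^2)"
  proof -
    let ?f = "\<lambda>j. (cmod (z$j))^2"
    have filter: "(\<Sum>j\<in>{j. P j}. ?f j) = (\<Sum>j\<in>UNIV. if P j then ?f j else 0)" for P
      using sum.inter_filter[of UNIV ?f P] by simp
    show ?thesis
      unfolding filter sum_subtractf[symmetric] by (rule sum.cong) (auto simp: hermitian_sign_def)
  qed
  have "quad_form ?M z = (\<Sum>i\<in>UNIV. ?h i * (cmod (z$i))^2)
      + Re (\<Sum>i\<in>UNIV. \<Sum>j\<in>UNIV. (A$i$j + A$j$i) * z$i * z$j)"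
    unfolding quad_form_expand entry by (simp add: sum.distrib Re_sum)
  then show "quad_form ?M z = quadQ \<sigma> a b (bilin_of_matrix A) z"
    by (simp add: quadQ_def signs symmetrize)
qed

definition matrix_of_cbilinear :: "(complex^'n \<Rightarrow> complex^'n \<Rightarrow> complex) \<Rightarrow> complex^'n^'n" where
  "matrix_of_cbilinear B = (\<chi> i j. B (axis i 1) (axis j 1))"

lemma cbilinear_0_left: "cbilinear B \<Longrightarrow> B 0 w = 0"
  unfolding cbilinear_def by (metis add.right_neutral add_cancel_right_right)

lemma cbilinear_0_right: "cbilinear B \<Longrightarrow> B w 0 = 0"
  unfolding cbilinear_def by (metis add.right_neutral add_cancel_right_right)

lemma cbilinear_sum_left:
  assumes "cbilinear B" "finite I"
  shows "B (\<Sum>i\<in>I. f i) w = (\<Sum>i\<in>I. B (f i) w)"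
  using assms(2) by induction (use assms(1) in \<open>auto simp: cbilinear_0_left cbilinear_def\<close>)

lemma cbilinear_sum_right:
  assumes "cbilinear B" "finite I"
  shows "B w (\<Sum>i\<in>I. f i) = (\<Sum>i\<in>I. B w (f i))"
  using assms(2) by induction (use assms(1) in \<open>auto simp: cbilinear_0_right cbilinear_def\<close>)

lemma bilin_of_matrix_of_cbilinear:
  fixes B :: "complex^'n::finite \<Rightarrow> complex^'n \<Rightarrow> complex"
  assumes "cbilinear B"
  shows "bilin_of_matrix (matrix_of_cbilinear B) = B"
proof (intro ext)
  fix z w :: "complex^'n"
  have "B z w = B (\<Sum>i\<in>UNIV. z$i *s axis i 1) (\<Sum>j\<in>UNIV. w$j *s axis j 1)"
    by (simp add: basis_expansion)
  also have "\<dots> = (\<Sum>i\<in>UNIV. \<Sum>j\<in>UNIV. B (z$i *s axis i 1) (w$j *s axis j 1))"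
    by (simp add: cbilinear_sum_left[OF assms] cbilinear_sum_right[OF assms]) (rule sum.swap)
  also have "\<dots> = bilin_of_matrix (matrix_of_cbilinear B) z w"
    using assms by (simp add: cbilinear_def bilin_of_matrix_def matrix_of_cbilinear_def algebra_simps)
  finally show "bilin_of_matrix (matrix_of_cbilinear B) z w = B z w" ..
qed

lemma det_quadQ_matrix_mat_1: "det (quadQ_matrix \<sigma> a b (mat 1 :: complex^'n::finite^'n)) \<noteq> 0"
proof -
  let ?M = "quadQ_matrix \<sigma> a b (mat 1 :: complex^'n^'n)"
  have "?M $ k $ l = 0" if "k \<noteq> l" for k l
    using that by (auto simp: quadQ_matrix_def mat_def split: sum.splits)
  moreover have "?M $ k $ k \<noteq> 0" for k
    by (cases k) (auto simp: quadQ_matrix_def mat_def hermitian_sign_def)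
  ultimately show ?thesis by (simp add: det_diagonal)
qed

lemma real_poly_fun_uminus: "p \<in> real_poly_fun \<Longrightarrow> (\<lambda>A. - p A) \<in> real_poly_fun"
  using real_poly_fun.mult[OF real_poly_fun.const[of "-1"]] by simp

lemma real_poly_fun_diff:
  "p \<in> real_poly_fun \<Longrightarrow> q \<in> real_poly_fun \<Longrightarrow> (\<lambda>A. p A - q A) \<in> real_poly_fun"
  using real_poly_fun.add[OF _ real_poly_fun_uminus] by simp

lemma real_poly_fun_sum:
  "finite I \<Longrightarrow> (\<And>i. i \<in> I \<Longrightarrow> f i \<in> real_poly_fun) \<Longrightarrow> (\<lambda>A. \<Sum>i\<in>I. f i A) \<in> real_poly_fun"
  by (induction I rule: finite_induct) (auto intro: real_poly_fun.intros)

lemma real_poly_fun_prod: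
  "finite I \<Longrightarrow> (\<And>i. i \<in> I \<Longrightarrow> f i \<in> real_poly_fun) \<Longrightarrow> (\<lambda>A. \<Prod>i\<in>I. f i A) \<in> real_poly_fun"
  by (induction I rule: finite_induct) (auto intro: real_poly_fun.intros)

lemma continuous_on_real_poly_fun: "p \<in> real_poly_fun \<Longrightarrow> continuous_on UNIV p"
  by (induction p rule: real_poly_fun.induct) (auto intro!: continuous_intros)

lemma real_poly_fun_det_quadQ_matrix: "(\<lambda>A. det (quadQ_matrix \<sigma> a b A)) \<in> real_poly_fun"
proof -
  have entry: "(\<lambda>A. quadQ_matrix \<sigma> a b A $ k $ l) \<in> real_poly_fun" for k l
    by (cases k; cases l)
      (auto simp: quadQ_matrix_def intro!: real_poly_fun.intros real_poly_fun_uminus real_poly_fun_diff)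
  show ?thesis
    unfolding det_def
    by (intro real_poly_fun_sum real_poly_fun.mult real_poly_fun.const real_poly_fun_prod entry
        finite_permutations) auto
qed

lemma real_polynomial_function_along_segment:
  assumes "p \<in> real_poly_fun"
  shows "real_polynomial_function (\<lambda>t. p ((1 - t) *\<^sub>R A + t *\<^sub>R B))"
  using assms
proof induction
  case (re i j)
  have "real_polynomial_function (\<lambda>t. Re (A$i$j) + t * (Re (B$i$j) - Re (A$i$j)))"
    by (intro real_polynomial_function.intros bounded_linear_mult_left)
  then show ?case by (simp add: algebra_simps)
next
  case (im i j)
  have "real_polynomial_function (\<lambda>t. Im (A$i$j) + t * (Im (B$i$j) - Im (A$i$j)))"
    by (intro real_polynomial_function.intros bounded_linear_mult_left)
  then show ?case by (simp add: algebra_simps)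
qed auto

lemma real_polynomial_function_finite_zeros:
  fixes q :: "real \<Rightarrow> real"
  assumes "real_polynomial_function q" "q c \<noteq> 0"
  shows "finite {t. q t = 0}"
proof -
  obtain a n where q: "q = (\<lambda>t. \<Sum>i\<le>n. a i * t^i)"
    using assms(1) real_polynomial_function_iff_sum by blast
  have "\<exists>k\<le>n. a k \<noteq> 0"
  proof (rule ccontr)
    assume "\<not> (\<exists>k\<le>n. a k \<noteq> 0)"
    then have "q c = 0" by (simp add: q)
    with assms(2) show False ..
  qed
  then show ?thesis
    unfolding q by (rule polyfun_rootbound_finite)
qed

lemma nonvanishing_locus_real_poly_fun:
  assumes p: "p \<in> real_poly_fun" and S: "convex S" and B: "B \<in> S" "p B \<noteq> 0"
  defines "G \<equiv> {A\<in>S. p A \<noteq> 0}"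
  shows "openin (top_of_set S) G" and "S \<subseteq> closure G"
    and "proper_real_algebraic_subvariety S (S - G)"
proof -
  have "open {A. p A \<noteq> 0}"
    using continuous_on_real_poly_fun[OF p] by (rule open_Collect_neq) simp
  then show "openin (top_of_set S) G"
    unfolding G_def by (metis (no_types) Collect_conj_eq Collect_mem_eq openin_open_Int)
  show "proper_real_algebraic_subvariety S (S - G)"
    unfolding proper_real_algebraic_subvariety_def
    by (intro conjI exI[of _ "{p}"]) (use p B in \<open>auto simp: G_def\<close>)
  show "S \<subseteq> closure G"
  proof
    fix A assume A: "A \<in> S"
    define path where "path t = (1 - t) *\<^sub>R A + t *\<^sub>R B" for t :: real
    have "finite {t. p (path t) = 0}"
      using real_polynomial_function_along_segment[OF p] B(2)
      by (intro real_polynomial_function_finite_zeros[where c = 1]) (simp_all add: path_def)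
    then have "eventually (\<lambda>t. t \<notin> {t. p (path t) = 0}) (at 0)"
      using islimpt_finite islimpt_iff_eventually by blast
    then have "eventually (\<lambda>t. p (path t) \<noteq> 0) (at_right 0)"
      by (simp add: eventually_at_split)
    moreover have "eventually (\<lambda>t. t \<in> {0<..<1}) (at_right (0::real))"
      by (intro eventually_at_rightI) auto
    ultimately have "eventually (\<lambda>t. path t \<in> G) (at_right 0)"
      by eventually_elim (use A B S in \<open>auto simp: G_def path_def convex_alt\<close>)
    then have "eventually (\<lambda>t. path t \<in> closure G) (at_right 0)"
      by (rule eventually_mono) (use closure_subset in blast)
    moreover have "(path \<longlongrightarrow> A) (at_right 0)"
      unfolding path_def by (auto intro!: tendsto_eq_intros)
    ultimately show "A \<in> closure G"
      by (intro Lim_in_closed_set[where f = path]) auto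
  qed
qed

lemma little_o_square_coefficients_eq_0:
  fixes \<alpha> \<gamma> :: real
  assumes small: "\<And>\<epsilon>. \<epsilon> > 0 \<Longrightarrow> eventually (\<lambda>t. \<bar>t * \<alpha> + t^2 * \<gamma>\<bar> \<le> \<epsilon> * t^2) (at_right 0)"
  shows "\<alpha> = 0" and "\<gamma> = 0"
proof -
  have pos: "eventually (\<lambda>t. t > 0) (at_right (0::real))"
    by (rule eventually_at_right_less)
  have divided: "eventually (\<lambda>t. t > 0 \<and> \<bar>\<alpha> + t * \<gamma>\<bar> \<le> \<epsilon> * t) (at_right 0)" if "\<epsilon> > 0" for \<epsilon>
    using small[OF that] pos
  proof eventually_elim
    case (elim t)
    have "t * \<alpha> + t^2 * \<gamma> = t * (\<alpha> + t * \<gamma>)"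
      by (simp add: power2_eq_square algebra_simps)
    then have "t * \<bar>\<alpha> + t * \<gamma>\<bar> = \<bar>t * \<alpha> + t^2 * \<gamma>\<bar>"
      using elim(2) by (simp add: abs_mult)
    also have "\<dots> \<le> t * (\<epsilon> * t)"
      using elim(1) by (simp add: power2_eq_square mult.assoc mult.left_commute)
    finally have "t * \<bar>\<alpha> + t * \<gamma>\<bar> \<le> t * (\<epsilon> * t)" .
    with elim(2) show ?case
      by (simp add: mult_le_cancel_left_pos)
  qed
  have "((\<lambda>t. \<alpha> + t * \<gamma>) \<longlongrightarrow> 0) (at_right 0)"
    by (rule Lim_null_comparison[where g = "\<lambda>t. 1 * t"])
      (use divided[of 1] in \<open>auto elim: eventually_mono intro!: tendsto_eq_intros\<close>)
  moreover have "((\<lambda>t. \<alpha> + t * \<gamma>) \<longlongrightarrow> \<alpha>) (at_right 0)"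
    by (auto intro!: tendsto_eq_intros)
  ultimately show "\<alpha> = 0"
    using tendsto_unique trivial_limit_at_right_real by blast
  show "\<gamma> = 0"
  proof (rule ccontr)
    assume "\<gamma> \<noteq> 0"
    then obtain t where "t > 0" "\<bar>\<alpha> + t * \<gamma>\<bar> \<le> \<bar>\<gamma>\<bar> / 2 * t"
      using eventually_happens'[OF trivial_limit_at_right_real divided[of "\<bar>\<gamma>\<bar> / 2"]] by auto
    with \<open>\<alpha> = 0\<close> \<open>\<gamma> \<noteq> 0\<close> show False
      by (simp add: abs_mult)
  qed
qed

lemma directional_second_order_estimate:
  fixes E :: "'a::real_normed_vector \<Rightarrow> real"
  assumes t: "t > 0" and D: "linear D"
    and dE: "\<And>s. 0 \<le> s \<Longrightarrow> s \<le> t \<Longrightarrow> (E has_derivative E' (p + s *\<^sub>R v)) (at (p + s *\<^sub>R v))"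
    and close: "\<And>s. 0 \<le> s \<Longrightarrow> s \<le> t \<Longrightarrow> \<bar>E' (p + s *\<^sub>R v) v - g0 - D (p + s *\<^sub>R v)\<bar> \<le> \<eta>"
  shows "\<bar>t * g0 + t * D p + t^2 / 2 * D v\<bar> \<le> \<bar>E (p + t *\<^sub>R v)\<bar> + \<bar>E p\<bar> + t * \<eta>"
proof -
  \<comment> \<open>the correction terms make the derivative of \<open>\<psi>\<close> exactly the quantity controlled by \<open>close\<close>\<close>
  define \<psi> where "\<psi> s = E (p + s *\<^sub>R v) - (s * g0 + s * D p + s^2 / 2 * D v)" for s
  have d\<psi>: "DERIV \<psi> s :> E' (p + s *\<^sub>R v) v - g0 - D (p + s *\<^sub>R v)" if "0 \<le> s" "s \<le> t" for s
  proof -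
    have "((\<lambda>s. p + s *\<^sub>R v) has_derivative (\<lambda>h. h *\<^sub>R v)) (at s)"
      by (auto intro!: derivative_eq_intros)
    from has_derivative_compose[OF this dE[OF that]]
    have "((\<lambda>s. E (p + s *\<^sub>R v)) has_derivative (\<lambda>h. E' (p + s *\<^sub>R v) (h *\<^sub>R v))) (at s)" .
    moreover have "(\<lambda>h. E' (p + s *\<^sub>R v) (h *\<^sub>R v)) = (*) (E' (p + s *\<^sub>R v) v)"
      using linear_scale[OF has_derivative_linear[OF dE[OF that]]] by (simp add: fun_eq_iff mult.commute)
    ultimately have "DERIV (\<lambda>s. E (p + s *\<^sub>R v)) s :> E' (p + s *\<^sub>R v) v"
      by (simp add: has_field_derivative_def)
    moreover have "DERIV (\<lambda>s. s * g0 + s * c + s^2 / 2 * d) s :> g0 + c + s * d" for c d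
      by (rule derivative_eq_intros refl | simp)+
    ultimately have "DERIV \<psi> s :> E' (p + s *\<^sub>R v) v - (g0 + D p + s * D v)"
      unfolding \<psi>_def by (rule DERIV_diff)
    moreover have "D (p + s *\<^sub>R v) = D p + s * D v"
      using D by (simp add: linear_add linear_scale)
    ultimately show ?thesis
      by (simp only: diff_diff_eq add.assoc)
  qed
  obtain \<xi> where "0 < \<xi>" "\<xi> < t"
    and "\<psi> t - \<psi> 0 = t * (E' (p + \<xi> *\<^sub>R v) v - g0 - D (p + \<xi> *\<^sub>R v))"
    using MVT2[OF t d\<psi>] by auto
  then have "\<bar>\<psi> t - \<psi> 0\<bar> \<le> t * \<eta>"
    using close t by (simp add: abs_mult mult_left_mono)
  moreover have "t * g0 + t * D p + t^2 / 2 * D v = E (p + t *\<^sub>R v) - E p - (\<psi> t - \<psi> 0)"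
    by (simp add: \<psi>_def)
  ultimately show ?thesis by linarith
qed

lemma cubic_bound_second_order_estimate:
  fixes E :: "'a::real_normed_vector \<Rightarrow> real"
  assumes dE: "\<And>x. norm x < r \<Longrightarrow> (E has_derivative E' x) (at x)"
    and D: "linear D"
    and taylor1: "\<eta> \<ge> 0" "\<And>y. norm y < r \<Longrightarrow> \<bar>E' y v - g0 - D y\<bar> \<le> \<eta> * norm y"
    and cubic: "C \<ge> 0" "\<And>z. norm z < r \<Longrightarrow> \<bar>E z\<bar> \<le> C * norm z ^ 3"
    and t: "t > 0" "t * (norm u + norm v) < r"
  shows "\<bar>t * g0 + t^2 * (D u + D v / 2)\<bar> \<le> 2 * C * (t * (norm u + norm v))^3 + \<eta> * (norm u + norm v) * t^2"
proof -
  let ?N = "norm u + norm v"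
  have near: "norm (t *\<^sub>R u + s *\<^sub>R v) \<le> t * ?N" if "0 \<le> s" "s \<le> t" for s
  proof -
    have "norm (t *\<^sub>R u + s *\<^sub>R v) \<le> t * norm u + s * norm v"
      using norm_triangle_ineq[of "t *\<^sub>R u" "s *\<^sub>R v"] t that by simp
    also have "\<dots> \<le> t * ?N"
      using that mult_right_mono[of s t "norm v"] by (simp add: algebra_simps)
    finally show ?thesis .
  qed
  have E_small: "\<bar>E (t *\<^sub>R u + s *\<^sub>R v)\<bar> \<le> C * (t * ?N)^3" if "0 \<le> s" "s \<le> t" for s
  proof -
    have "\<bar>E (t *\<^sub>R u + s *\<^sub>R v)\<bar> \<le> C * norm (t *\<^sub>R u + s *\<^sub>R v) ^ 3"
      using near[OF that] t by (intro cubic(2)) linarith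
    also have "\<dots> \<le> C * (t * ?N)^3"
      using near[OF that] cubic(1) by (intro mult_left_mono power_mono) auto
    finally show ?thesis .
  qed
  have "\<bar>t * g0 + t * D (t *\<^sub>R u) + t^2 / 2 * D v\<bar>
      \<le> \<bar>E (t *\<^sub>R u + t *\<^sub>R v)\<bar> + \<bar>E (t *\<^sub>R u)\<bar> + t * (\<eta> * (t * ?N))"
  proof (rule directional_second_order_estimate[OF t(1) D])
    fix s assume s: "0 \<le> s" "s \<le> t"
    let ?y = "t *\<^sub>R u + s *\<^sub>R v"
    have y: "norm ?y < r"
      using near[OF s] t by linarith
    then show "(E has_derivative E' ?y) (at ?y)"
      by (rule dE)
    show "\<bar>E' ?y v - g0 - D ?y\<bar> \<le> \<eta> * (t * ?N)"
      using taylor1(2)[OF y] mult_left_mono[OF near[OF s] taylor1(1)] by linarith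
  qed
  also have "\<dots> \<le> 2 * C * (t * ?N)^3 + \<eta> * ?N * t^2"
    using E_small[of t] E_small[of 0] t by (simp add: power2_eq_square algebra_simps)
  finally show ?thesis
    using linear_scale[OF D] by (simp add: power2_eq_square algebra_simps)
qed

lemma cubic_bound_second_order_terms:
  fixes E :: "'a::real_normed_vector \<Rightarrow> real"
  assumes U: "open U" "0 \<in> U"
    and dE: "\<And>x. x \<in> U \<Longrightarrow> (E has_derivative E' x) (at x)"
    and d2E: "((\<lambda>x. E' x v) has_derivative D) (at 0)"
    and bound: "\<delta> > 0" "\<And>z. norm z < \<delta> \<Longrightarrow> \<bar>E z\<bar> \<le> C * norm z ^ 3"
    and \<epsilon>: "\<epsilon> > 0"
  shows "eventually (\<lambda>t. \<bar>t * E' 0 v + t^2 * (D u + D v / 2)\<bar> \<le> \<epsilon> * t^2) (at_right 0)"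
proof -
  define N where "N = norm u + norm v"
  define \<eta> where "\<eta> = \<epsilon> / (2 * (N + 1))"
  have "N \<ge> 0" by (simp add: N_def)
  then have \<eta>0: "\<eta> > 0" using \<epsilon> by (simp add: \<eta>_def)
  have "\<eta> * N \<le> \<eta> * (N + 1)" using \<eta>0 by simp
  also have "\<dots> = \<epsilon> / 2" using \<open>N \<ge> 0\<close> by (simp add: \<eta>_def field_simps)
  finally have \<eta>: "\<eta> > 0" "\<eta> * N \<le> \<epsilon> / 2" using \<eta>0 by auto
  obtain d where d: "d > 0" and taylor1: "\<And>y. norm y < d \<Longrightarrow> \<bar>E' y v - E' 0 v - D y\<bar> \<le> \<eta> * norm y"
    using d2E \<eta>(1) unfolding has_derivative_at_alt by (metis diff_zero real_norm_def)
  obtain r where r: "r > 0" "ball 0 r \<subseteq> U"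
    using U open_contains_ball by blast
  define \<rho> where "\<rho> = min (min d r) \<delta>"
  define C0 where "C0 = max C 0"
  have cubic0: "\<bar>E z\<bar> \<le> C0 * norm z ^ 3" if "norm z < \<rho>" for z
    using bound(2)[of z] that mult_right_mono[of C C0 "norm z ^ 3"] by (simp add: \<rho>_def C0_def)
  have "((\<lambda>t. t * N) \<longlongrightarrow> 0) (at_right 0)"
    by (auto intro!: tendsto_eq_intros)
  then have "eventually (\<lambda>t. t * N < \<rho>) (at_right 0)"
    by (rule order_tendstoD(2)) (use d r bound(1) in \<open>simp add: \<rho>_def\<close>)
  moreover have "((\<lambda>t. 2 * C0 * N^3 * t) \<longlongrightarrow> 0) (at_right 0)"
    by (auto intro!: tendsto_eq_intros)
  then have "eventually (\<lambda>t. 2 * C0 * N^3 * t < \<epsilon> / 2) (at_right 0)"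
    by (rule order_tendstoD(2)) (use \<epsilon> in simp)
  ultimately show ?thesis
    using eventually_at_right_less[of 0]
  proof eventually_elim
    case (elim t)
    have "\<bar>t * E' 0 v + t^2 * (D u + D v / 2)\<bar> \<le> 2 * C0 * (t * N)^3 + \<eta> * N * t^2"
      unfolding N_def
    proof (rule cubic_bound_second_order_estimate[where r = \<rho>])
      show "linear D" using d2E has_derivative_linear by blast
      show "(E has_derivative E' x) (at x)" if "norm x < \<rho>" for x
        using that r by (intro dE) (auto simp: \<rho>_def)
      show "\<bar>E' y v - E' 0 v - D y\<bar> \<le> \<eta> * norm y" if "norm y < \<rho>" for y
        using that by (intro taylor1) (simp add: \<rho>_def)
    qed (use elim \<eta>(1) cubic0 in \<open>simp_all add: C0_def N_def\<close>)
    also have "2 * C0 * (t * N)^3 = t^2 * (2 * C0 * N^3 * t)"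
      by (simp add: power2_eq_square power3_eq_cube)
    also have "t^2 * (2 * C0 * N^3 * t) + \<eta> * N * t^2 \<le> t^2 * (\<epsilon> / 2) + \<epsilon> / 2 * t^2"
      using elim \<eta>(2) by (intro add_mono mult_left_mono mult_right_mono) auto
    finally show ?case by simp
  qed
qed

lemma cubic_bound_derivatives_vanish:
  fixes E :: "'a::real_normed_vector \<Rightarrow> real"
  assumes U: "open U" "0 \<in> U"
    and dE: "\<And>x. x \<in> U \<Longrightarrow> (E has_derivative E' x) (at x)"
    and d2E: "((\<lambda>x. E' x v) has_derivative D) (at 0)"
    and bound: "\<delta> > 0" "\<And>z. norm z < \<delta> \<Longrightarrow> \<bar>E z\<bar> \<le> C * norm z ^ 3"
  shows "E' 0 v = 0" and "D u = 0"
proof -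
  note vanish = little_o_square_coefficients_eq_0[OF cubic_bound_second_order_terms[OF U dE d2E bound]]
  show "E' 0 v = 0" by (rule vanish(1))
  have "D 0 = 0"
    using d2E has_derivative_linear linear_0 by blast
  then have "D v = 0"
    using vanish(2)[of 0] by simp
  then show "D u = 0"
    using vanish(2)[of u] by simp
qed

lemma abs_linear_le_Basis:
  fixes f :: "'a::euclidean_space \<Rightarrow> real"
  assumes "linear f" and bound: "\<And>b. b \<in> Basis \<Longrightarrow> \<bar>f b\<bar> \<le> K"
  shows "\<bar>f w\<bar> \<le> real DIM('a) * K * norm w"
proof -
  have "f w = f (\<Sum>b\<in>Basis. (w \<bullet> b) *\<^sub>R b)"
    by (simp add: euclidean_representation)
  also have "\<dots> = (\<Sum>b\<in>Basis. (w \<bullet> b) * f b)"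
    using assms(1) by (simp add: linear_sum linear_scale)
  finally have "\<bar>f w\<bar> \<le> (\<Sum>b\<in>Basis. \<bar>w \<bullet> b\<bar> * \<bar>f b\<bar>)"
    by (metis (no_types, lifting) abs_mult sum.cong sum_abs)
  also have "\<dots> \<le> (\<Sum>b\<in>(Basis::'a set). norm w * K)"
    by (intro sum_mono mult_mono) (auto simp: Basis_le_norm bound)
  finally show ?thesis by (simp add: mult_ac)
qed

lemma cubic_bound_derivative_little_o:
  fixes E :: "'a::euclidean_space \<Rightarrow> real"
  assumes U: "open U" "0 \<in> U"
    and dE: "\<And>x. x \<in> U \<Longrightarrow> (E has_derivative E' x) (at x)"
    and d2E: "\<And>v. ((\<lambda>x. E' x v) has_derivative D v) (at 0)"
    and bound: "\<delta> > 0" "\<And>z. norm z < \<delta> \<Longrightarrow> \<bar>E z\<bar> \<le> C * norm z ^ 3"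
    and \<epsilon>: "\<epsilon> > 0"
  shows "eventually (\<lambda>y. \<forall>w. \<bar>E' y w\<bar> \<le> \<epsilon> * norm y * norm w) (nhds 0)"
proof -
  define e where "e = \<epsilon> / DIM('a)"
  have e: "e > 0" using \<epsilon> by (simp add: e_def)
  have "eventually (\<lambda>y. \<bar>E' y b\<bar> \<le> e * norm y) (nhds 0)" for b
  proof -
    note vanish = cubic_bound_derivatives_vanish[OF U dE d2E[of b] bound]
    obtain d where "d > 0" "\<And>y. norm y < d \<Longrightarrow> \<bar>E' y b - E' 0 b - D b y\<bar> \<le> e * norm y"
      using d2E[of b] e unfolding has_derivative_at_alt by (metis diff_zero real_norm_def)
    then show ?thesis
      unfolding eventually_nhds_metric using vanish by (auto simp: dist_norm)
  qed
  then have "eventually (\<lambda>y. \<forall>b\<in>Basis. \<bar>E' y b\<bar> \<le> e * norm y) (nhds 0)"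
    by (simp add: eventually_ball_finite)
  moreover have "eventually (\<lambda>y. y \<in> U) (nhds 0)"
    using U by (rule eventually_nhds_in_open)
  ultimately show ?thesis
  proof eventually_elim
    case (elim y)
    have "\<bar>E' y w\<bar> \<le> DIM('a) * (e * norm y) * norm w" for w
      using abs_linear_le_Basis[OF has_derivative_linear[OF dE[OF elim(2)]]] elim(1) by blast
    then show ?case by (simp add: e_def)
  qed
qed

lemma smooth_on_has_derivative:
  assumes "open U" "smooth_on U f" "x \<in> U"
  shows "(iter_deriv vs f has_derivative frechet_derivative (iter_deriv vs f) (at x)) (at x)"
proof -
  have "iter_deriv vs f differentiable (at x within U)"
    using assms(2,3) by (simp add: smooth_on_def differentiable_on_def)
  then have "iter_deriv vs f differentiable (at x)"
    using at_within_open[OF assms(3,1)] by simp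
  then show ?thesis
    using frechet_derivative_works by blast
qed

lemma smooth_cubic_bound_derivative_little_o:
  fixes E :: "'a::euclidean_space \<Rightarrow> real"
  assumes "open U" "0 \<in> U" "smooth_on U E"
    and "\<delta> > 0" "\<And>z. norm z < \<delta> \<Longrightarrow> \<bar>E z\<bar> \<le> C * norm z ^ 3" "\<epsilon> > 0"
  shows "eventually (\<lambda>y. \<forall>w. \<bar>frechet_derivative E (at y) w\<bar> \<le> \<epsilon> * norm y * norm w) (nhds 0)"
  using smooth_on_has_derivative[OF assms(1,3), of _ "[]"] smooth_on_has_derivative[OF assms(1,3,2), of "[_]"]
  by (intro cubic_bound_derivative_little_o[OF assms(1,2) _ _ assms(4-6)]) simp_all

lemma isolated_CR_singularity_quad_form_perturbation:
  assumes sym: "transpose S = S" and det: "det S \<noteq> 0" and U: "open U" "0 \<in> U"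
    and dE: "\<And>y. y \<in> U \<Longrightarrow> (E has_derivative E' y) (at y)"
    and small: "\<And>\<epsilon>. \<epsilon> > 0 \<Longrightarrow> eventually (\<lambda>y. \<forall>w. \<bar>E' y w\<bar> \<le> \<epsilon> * norm y * norm w) (nhds 0)"
  shows "isolated_CR_singularity_at_origin U (\<lambda>z. quad_form S z + E z)"
proof -
  let ?F = "\<lambda>z. quad_form S z + E z"
  have "inj ((*v) S)"
    using det by (metis invertible_det_nz invertible_left_inverse matrix_left_invertible_injective)
  then obtain c where c: "c > 0" "\<And>x. c * norm x \<le> norm (S *v x)"
    using linear_inj_bounded_below_pos[of "(*v) S"] by auto
  have "eventually (\<lambda>y. y \<in> U \<and> (\<forall>w. \<bar>E' y w\<bar> \<le> c * norm y * norm w)) (nhds 0)"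
    using eventually_nhds_in_open[OF U] small[OF c(1)] by (rule eventually_conj)
  then obtain r where r: "r > 0"
    and near: "\<And>y. norm y < r \<Longrightarrow> y \<in> U \<and> (\<forall>w. \<bar>E' y w\<bar> \<le> c * norm y * norm w)"
    unfolding eventually_nhds_metric by (auto simp: dist_norm)
  have dF: "frechet_derivative ?F (at y) = (\<lambda>w. 2 * (realify w \<bullet> (S *v realify y)) + E' y w)"
    if "y \<in> U" for y
    using frechet_derivative_at[OF has_derivative_add[OF has_derivative_quad_form[OF sym] dE[OF that]]]
    by simp
  have "CR_singular_graph ?F 0"
    unfolding CR_singular_graph_iff dF[OF U(2)] using near[of 0] r by simp
  moreover have "\<not> CR_singular_graph ?F z" if z: "norm z < r" "z \<noteq> 0" for z
  proof
    assume "CR_singular_graph ?F z"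
    \<comment> \<open>test the derivative in the direction of the gradient of the quadratic part\<close>
    define x where "x = S *v realify z"
    have "frechet_derivative ?F (at z) (unrealify x) = 0"
      using \<open>CR_singular_graph ?F z\<close> CR_singular_graph_iff by blast
    then have "2 * (realify (unrealify x) \<bullet> x) + E' z (unrealify x) = 0"
      using near[OF z(1)] by (simp add: dF x_def)
    then have "2 * norm x ^ 2 = - E' z (unrealify x)"
      by (simp add: power2_norm_eq_inner)
    also have "\<dots> \<le> c * norm z * norm x"
      using near[OF z(1)] norm_unrealify[of x] abs_le_D2 by metis
    also have "\<dots> \<le> norm x * norm x"
      using c(2)[of "realify z"] by (intro mult_right_mono) (simp_all add: x_def)
    finally have "norm x = 0"
      by (simp add: power2_eq_square mult_le_0_iff)
    then show False
      using c z by (metis mult_le_0_iff norm_le_zero_iff not_less x_def norm_realify)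
  qed
  ultimately show ?thesis
    unfolding isolated_CR_singularity_at_origin_def using U r
    by (intro conjI exI[of _ "ball 0 r \<times> UNIV"]) (auto simp: open_Times)
qed

theorem proposition2p1:
  fixes \<sigma> :: "'n::finite \<Rightarrow> nat" and a b :: nat
  assumes enum: "bij_betw \<sigma> UNIV {..<CARD('n)}"
    and ab: "a + b \<le> CARD('n)"
  shows
    "(\<forall>B. cbilinear B \<longrightarrow>
        (isolated_CR_singularity_at_origin UNIV (quadQ \<sigma> a b B)
           \<longleftrightarrow> nondegenerate_form (quadQ \<sigma> a b B)))
   \<and> (let S = {A :: (complex^'n^'n). transpose A = A};
          G = {A\<in>S. isolated_CR_singularity_at_origin UNIV (quadQ \<sigma> a b (bilin_of_matrix A))}
      in openin (top_of_set S) G \<and> S \<subseteq> closure G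
         \<and> proper_real_algebraic_subvariety S (S - G))
   \<and> (\<forall>B U (E :: complex^'n \<Rightarrow> real).
        cbilinear B \<and> open U \<and> 0 \<in> U \<and> smooth_on U E
        \<and> (\<exists>C \<delta>. \<delta> > 0 \<and> (\<forall>z. norm z < \<delta> \<longrightarrow> \<bar>E z\<bar> \<le> C * norm z ^ 3))
        \<and> nondegenerate_form (quadQ \<sigma> a b B)
        \<longrightarrow> isolated_CR_singularity_at_origin U (\<lambda>z. quadQ \<sigma> a b B z + E z))"
proof (intro conjI allI impI)
  fix B :: "complex^'n \<Rightarrow> complex^'n \<Rightarrow> complex"
  assume "cbilinear B"
  then have "quadQ \<sigma> a b B = quad_form (quadQ_matrix \<sigma> a b (matrix_of_cbilinear B))"
    by (simp add: quad_form_quadQ_matrix bilin_of_matrix_of_cbilinear)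
  then show "isolated_CR_singularity_at_origin UNIV (quadQ \<sigma> a b B)
      \<longleftrightarrow> nondegenerate_form (quadQ \<sigma> a b B)"
    by (simp add: isolated_CR_singularity_quad_form_iff nondegenerate_quad_form_iff)
next
  define S where "S = {A :: complex^'n^'n. transpose A = A}"
  have "convex S"
    by (auto simp: S_def convex_def transpose_def vec_eq_iff)
  have "mat 1 \<in> S"
    by (simp add: S_def)
  note generic = nonvanishing_locus_real_poly_fun[OF real_poly_fun_det_quadQ_matrix
      \<open>convex S\<close> \<open>mat 1 \<in> S\<close> det_quadQ_matrix_mat_1]
  have "{A\<in>S. isolated_CR_singularity_at_origin UNIV (quadQ \<sigma> a b (bilin_of_matrix A))}
      = {A\<in>S. det (quadQ_matrix \<sigma> a b A) \<noteq> 0}"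
    by (simp flip: quad_form_quadQ_matrix add: isolated_CR_singularity_quad_form_iff)
  with generic show "let S = {A :: (complex^'n^'n). transpose A = A};
          G = {A\<in>S. isolated_CR_singularity_at_origin UNIV (quadQ \<sigma> a b (bilin_of_matrix A))}
      in openin (top_of_set S) G \<and> S \<subseteq> closure G \<and> proper_real_algebraic_subvariety S (S - G)"
    unfolding Let_def S_def[symmetric] by simp
next
  fix B U and E :: "complex^'n \<Rightarrow> real"
  assume "cbilinear B \<and> open U \<and> 0 \<in> U \<and> smooth_on U E
      \<and> (\<exists>C \<delta>. \<delta> > 0 \<and> (\<forall>z. norm z < \<delta> \<longrightarrow> \<bar>E z\<bar> \<le> C * norm z ^ 3))
      \<and> nondegenerate_form (quadQ \<sigma> a b B)"
  then obtain S C \<delta> where U: "open U" "0 \<in> U" and smooth: "smooth_on U E"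
    and bound: "\<delta> > 0" "\<And>z. norm z < \<delta> \<Longrightarrow> \<bar>E z\<bar> \<le> C * norm z ^ 3"
    and S: "transpose S = S" "quadQ \<sigma> a b B = quad_form S" "det S \<noteq> 0"
    by (auto simp: nondegenerate_form_iff)
  show "isolated_CR_singularity_at_origin U (\<lambda>z. quadQ \<sigma> a b B z + E z)"
    unfolding S(2)
    by (rule isolated_CR_singularity_quad_form_perturbation[OF S(1,3) U
          smooth_on_has_derivative[OF U(1) smooth, of _ "[]", simplified]
          smooth_cubic_bound_derivative_little_o[OF U smooth bound]])
qed

end
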